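(* In the setting of the context, let $h:\mathbb{R}^{p_z}\to\mathbb{R}$ be measurable with $h(Z)$ non-degenerate (not almost surely constant), and let $V=[h(Z),\,U-h(Z)]'\in\mathbb{R}^2$, with all expectations involved finite. Suppose $K$ has the omnibus property. Then $V$ satisfies Condition 1 and Condition 2. In particular, under $\mathbb{H}_o$, $\mu_V(Z)=h(Z)[1,-1]'$ is not almost surely zero, and under $\mathbb{H}_a$, $\delta_V\neq0$.
   Context: Let $\nu$ be a measure on $\mathbb{R}^{p_z}$ symmetric about the origin and $K(z)=\int_{\mathbb{R}^{p_z}}(1-\cos(z's))\nu(ds)$ (so $K(-z)=K(z)$). Let $U\in\mathbb{R}$ with $\mathbb{E}U=0$, $Z\in\mathbb{R}^{p_z}$, $V\in\mathbb{R}^{p_v}$ be jointly distributed, $D=(U,V,Z)$, and $D^\dagger=(U^\dagger,V^\dagger,Z^\dagger)$ an independent copy of $D$. Define $\mathrm{GMDD}(U|Z)=-\mathbb{E}[UU^\dagger K(Z-Z^\dagger)]$, $\mu_U(z)=\mathbb{E}[U|Z=z]$, $\mu_V(z)=\mathbb{E}[V|Z=z]$, $m(z)=\mathbb{E}[K(Z-Z^\dagger)V^\dagger\mid Z=z]$, and $\delta_V=\mathbb{E}[K(Z-Z^\dagger)VU^\dagger]\in\mathbb{R}^{p_v}$. $\mathbb{H}_o$: $\mu_U(Z)=0$ a.s.; $\mathbb{H}_a$: $\mathbb{P}(\mu_U(Z)\ne0)>0$. $K$ has the omnibus property if $\mathrm{GMDD}(U|Z)=0$ exactly when $\mathbb{H}_o$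 holds. Condition 1: if $\mathbb{H}_a$ holds, then $\mathbb{E}[m(Z)\mu_U(Z)]\ne0\in\mathbb{R}^{p_v}$. Condition 2 (first-order non-degeneracy): under $\mathbb{H}_o$, $\mu_V(Z)$ is not almost surely the zero vector. *)

theory Defs
  imports "HOL-Probability.Probability"
begin

definition sigmaZ :: "'a measure \<Rightarrow> ('a \<Rightarrow> 'z::topological_space) \<Rightarrow> 'a measure" where
  "sigmaZ M Z = vimage_algebra (space M) Z borel"

definition muU :: "'a measure \<Rightarrow> ('a \<Rightarrow> real) \<Rightarrow> ('a \<Rightarrow> 'z::topological_space) \<Rightarrow> 'a \<Rightarrow> real" where
  "muU M U Z = real_cond_exp M (sigmaZ M Z) U"

definition muV :: "'a measure \<Rightarrow> ('a \<Rightarrow> 'z::topological_space) \<Rightarrow> ('a \<Rightarrow> 'v::euclidean_space) \<Rightarrow> 'a \<Rightarrow> 'v" where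
  "muV M Z V = (\<lambda>x. \<Sum>b\<in>Basis. real_cond_exp M (sigmaZ M Z) (\<lambda>y. V y \<bullet> b) x *\<^sub>R b)"

definition H0 :: "'a measure \<Rightarrow> ('a \<Rightarrow> real) \<Rightarrow> ('a \<Rightarrow> 'z::topological_space) \<Rightarrow> bool" where
  "H0 M U Z \<longleftrightarrow> (AE x in M. muU M U Z x = 0)"

definition Ha :: "'a measure \<Rightarrow> ('a \<Rightarrow> real) \<Rightarrow> ('a \<Rightarrow> 'z::topological_space) \<Rightarrow> bool" where
  "Ha M U Z \<longleftrightarrow> measure M {x \<in> space M. muU M U Z x \<noteq> 0} > 0"

definition Kfun :: "'z::euclidean_space measure \<Rightarrow> 'z \<Rightarrow> real" where
  "Kfun \<nu> z = (\<integral>s. 1 - cos (z \<bullet> s) \<partial>\<nu>)"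

text \<open>GMDD(U|Z) = - E[U U' K(Z - Z')], (U',Z') an independent copy (product measure)\<close>
definition GMDD :: "'a measure \<Rightarrow> ('a \<Rightarrow> real) \<Rightarrow> ('a \<Rightarrow> 'z::real_vector) \<Rightarrow> ('z \<Rightarrow> real) \<Rightarrow> real" where
  "GMDD M U Z K = - (\<integral>w. U (fst w) * U (snd w) * K (Z (fst w) - Z (snd w)) \<partial>(M \<Otimes>\<^sub>M M))"

definition omnibus :: "('z::euclidean_space \<Rightarrow> real) \<Rightarrow> bool" where
  "omnibus K \<longleftrightarrow> (\<forall>P :: (real \<times> 'z) measure.
     prob_space P \<and> sets P = sets borel \<and> integrable P fst \<and> (\<integral>x. fst x \<partial>P) = 0 \<and>
     integrable (P \<Otimes>\<^sub>M P) (\<lambda>w. fst (fst w) * fst (snd w) * K (snd (fst w) - snd (snd w)))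
     \<longrightarrow> (GMDD P fst snd K = 0 \<longleftrightarrow> H0 P fst snd))"

definition mfun :: "'a measure \<Rightarrow> ('a \<Rightarrow> 'z::real_vector) \<Rightarrow> ('a \<Rightarrow> 'v::euclidean_space) \<Rightarrow> ('z \<Rightarrow> real) \<Rightarrow> 'z \<Rightarrow> 'v" where
  "mfun M Z V K z = (\<integral>b. K (z - Z b) *\<^sub>R V b \<partial>M)"

definition deltaV :: "'a measure \<Rightarrow> ('a \<Rightarrow> real) \<Rightarrow> ('a \<Rightarrow> 'z::real_vector) \<Rightarrow> ('a \<Rightarrow> 'v::euclidean_space) \<Rightarrow> ('z \<Rightarrow> real) \<Rightarrow> 'v" where
  "deltaV M U Z V K = (\<integral>w. (K (Z (fst w) - Z (snd w)) * U (snd w)) *\<^sub>R V (fst w) \<partial>(M \<Otimes>\<^sub>M M))"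

definition cond1 :: "'a measure \<Rightarrow> ('a \<Rightarrow> real) \<Rightarrow> ('a \<Rightarrow> 'z::euclidean_space) \<Rightarrow> ('a \<Rightarrow> 'v::euclidean_space) \<Rightarrow> ('z \<Rightarrow> real) \<Rightarrow> bool" where
  "cond1 M U Z V K \<longleftrightarrow> (Ha M U Z \<longrightarrow> (\<integral>x. muU M U Z x *\<^sub>R mfun M Z V K (Z x) \<partial>M) \<noteq> 0)"

definition cond2 :: "'a measure \<Rightarrow> ('a \<Rightarrow> real) \<Rightarrow> ('a \<Rightarrow> 'z::euclidean_space) \<Rightarrow> ('a \<Rightarrow> 'v::euclidean_space) \<Rightarrow> bool" where
  "cond2 M U Z V \<longleftrightarrow> (H0 M U Z \<longrightarrow> \<not> (AE x in M. muV M Z V x = 0))"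

end

theory Submission
  imports Defs
begin

(* Let T p = fst p + snd p, so that T (V x) = U x. Applying T inside the integrals,
   T(delta_V) = E[K(Z - Z') U U'] = -GMDD(U|Z), and, by the tower property for
   E[. | Z] and Fubini, T(E[mu_U(Z) m(Z)]) = E[U m(Z)] = -GMDD(U|Z) as well. Under H_a
   the omnibus property, applied to the law of (U, Z), makes GMDD(U|Z) nonzero, so
   neither vector vanishes. For Condition 2, the first component of mu_V(Z) is
   E[h(Z) | Z] = h(Z), which is not almost surely zero. *)

lemma sqrt_2_not_rat: "sqrt 2 \<notin> \<rat>"
proof
  assume "sqrt 2 \<in> \<rat>"
  then obtain m n :: nat where n: "n \<noteq> 0" and frac: "\<bar>sqrt 2\<bar> = real m / real n"
    and cop: "coprime m n"
    by (rule Rats_abs_nat_div_natE)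
  have "real m = sqrt 2 * real n" using frac n by (simp add: field_simps)
  then have "real (m\<^sup>2) = real (2 * n\<^sup>2)" by (simp add: power_mult_distrib)
  then have sq: "m\<^sup>2 = 2 * n\<^sup>2" by (simp only: of_nat_eq_iff)
  then have "even m" by (metis dvd_triv_left even_power)
  then obtain k where "m = 2 * k" by blast
  with sq have "n\<^sup>2 = 2 * k\<^sup>2" by (simp add: power2_eq_square)
  then have "even n" by (metis dvd_triv_left even_power)
  with \<open>even m\<close> cop show False by fastforce
qed

lemma cos_eq_1_and_cos_sqrt_2_eq_1_imp_zero:
  fixes a :: real
  assumes "cos a = 1" and "cos (sqrt 2 * a) = 1"
  shows "a = 0"
proof (rule ccontr)
  assume "a \<noteq> 0"
  obtain n :: int where n: "a = of_int n * 2 * pi" using assms(1) cos_one_2pi_int by blast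
  obtain m :: int where m: "sqrt 2 * a = of_int m * 2 * pi" using assms(2) cos_one_2pi_int by blast
  have "n \<noteq> 0" using n \<open>a \<noteq> 0\<close> by auto
  then have "sqrt 2 = of_int m / of_int n" using n m by (simp add: field_simps)
  then have "sqrt 2 \<in> \<rat>" by simp
  with sqrt_2_not_rat show False ..
qed

(* nu need not be sigma-finite, so parametric integrals are moved to the finite
   measure density nu g, where g is integrable and vanishes only where f does. *)
lemma borel_measurable_integral_weighted:
  fixes f :: "'b \<Rightarrow> 'c \<Rightarrow> real" and g :: "'c \<Rightarrow> real"
  assumes f: "case_prod f \<in> borel_measurable (N \<Otimes>\<^sub>M \<nu>)"
    and g[measurable]: "g \<in> borel_measurable \<nu>" and g_int: "integrable \<nu> g"
    and g_nonneg: "\<And>s. 0 \<le> g s" and f_zero: "\<And>x s. g s = 0 \<Longrightarrow> f x s = 0"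
  shows "(\<lambda>x. \<integral>s. f x s \<partial>\<nu>) \<in> borel_measurable N"
proof -
  define \<nu>' where "\<nu>' = density \<nu> g"
  have "emeasure \<nu>' (space \<nu>') = (\<integral>\<^sup>+ s. ennreal (norm (g s)) \<partial>\<nu>)"
    unfolding \<nu>'_def by (auto simp: emeasure_density g_nonneg intro!: nn_integral_cong)
  also have "\<dots> < \<infinity>" using g_int by (simp add: integrable_iff_bounded)
  finally interpret \<nu>': finite_measure \<nu>' by (intro finite_measureI) simp
  have "case_prod (\<lambda>x s. f x s / g s) \<in> borel_measurable (N \<Otimes>\<^sub>M \<nu>')"
    unfolding \<nu>'_def
    using measurable_cong_sets[OF sets_pair_measure_cong[OF refl sets_density] refl] f
    by measurable
  then have "(\<lambda>x. \<integral>s. f x s / g s \<partial>\<nu>') \<in> borel_measurable N"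
    by (rule \<nu>'.borel_measurable_lebesgue_integral)
  moreover have "(\<integral>s. f x s / g s \<partial>\<nu>') = (\<integral>s. f x s \<partial>\<nu>)" if "x \<in> space N" for x
  proof -
    have "(\<integral>s. f x s / g s \<partial>\<nu>') = (\<integral>s. g s *\<^sub>R (f x s / g s) \<partial>\<nu>)"
      unfolding \<nu>'_def using measurable_Pair2[OF f that] by (intro integral_density) (auto simp: g_nonneg)
    also have "\<dots> = (\<integral>s. f x s \<partial>\<nu>)"
      by (intro Bochner_Integration.integral_cong refl) (simp add: f_zero)
    finally show ?thesis .
  qed
  ultimately show ?thesis by (simp cong: measurable_cong)
qed

(* As sqrt 2 is irrational, cos t = cos (sqrt 2 * t) = 1 only for t = 0, so this
   nu-integrable weight vanishes only at the origin. *)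
definition cos_weight :: "'z::euclidean_space \<Rightarrow> real" where
  "cos_weight s = (\<Sum>b\<in>Basis. (1 - cos (b \<bullet> s)) + (1 - cos ((sqrt 2 *\<^sub>R b) \<bullet> s)))"

lemma cos_weight_nonneg: "0 \<le> cos_weight s"
  unfolding cos_weight_def by (intro sum_nonneg add_nonneg_nonneg) (simp_all add: cos_le_one)

lemma cos_weight_pos:
  assumes "s \<noteq> 0"
  shows "0 < cos_weight s"
proof -
  obtain b where b: "b \<in> Basis" "b \<bullet> s \<noteq> 0"
    using assms euclidean_all_zero_iff[of s] by (auto simp: inner_commute)
  then have "\<not> (cos (b \<bullet> s) = 1 \<and> cos (sqrt 2 * (b \<bullet> s)) = 1)"
    using cos_eq_1_and_cos_sqrt_2_eq_1_imp_zero by blast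
  then have "0 < (1 - cos (b \<bullet> s)) + (1 - cos ((sqrt 2 *\<^sub>R b) \<bullet> s))"
    using cos_le_one[of "b \<bullet> s"] cos_le_one[of "sqrt 2 * (b \<bullet> s)"]
    unfolding inner_scaleR_left by linarith
  also have "\<dots> \<le> cos_weight s"
    unfolding cos_weight_def
    by (intro member_le_sum[OF b(1)] add_nonneg_nonneg) (simp_all add: cos_le_one)
  finally show ?thesis .
qed

lemma borel_measurable_cos_weight[measurable]: "cos_weight \<in> borel_measurable borel"
  unfolding cos_weight_def by measurable

lemma Kfun_borel_measurable:
  fixes \<nu> :: "'z::euclidean_space measure"
  assumes sets: "sets \<nu> = sets borel"
    and int: "\<And>z. integrable \<nu> (\<lambda>s. 1 - cos (z \<bullet> s))"
  shows "Kfun \<nu> \<in> borel_measurable borel"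
  unfolding Kfun_def
proof (rule borel_measurable_integral_weighted[where g = cos_weight])
  show "case_prod (\<lambda>z s. 1 - cos (z \<bullet> s)) \<in> borel_measurable (borel \<Otimes>\<^sub>M \<nu>)"
    unfolding measurable_cong_sets[OF sets_pair_measure_cong[OF refl sets] refl] by measurable
  show "cos_weight \<in> borel_measurable \<nu>"
    unfolding measurable_cong_sets[OF sets refl] by measurable
  show "integrable \<nu> cos_weight"
    unfolding cos_weight_def by (intro Bochner_Integration.integrable_sum Bochner_Integration.integrable_add int)
  show "1 - cos (z \<bullet> s) = 0" if "cos_weight s = 0" for z s
    using cos_weight_pos[of s] that by (cases "s = 0") auto
qed (rule cos_weight_nonneg)

lemma sigma_finite_subalgebra_sigmaZ:
  assumes "prob_space M" and Z: "Z \<in> borel_measurable M"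
  shows "sigma_finite_subalgebra M (sigmaZ M Z)"
proof -
  interpret prob_space M by fact
  have "subalgebra M (sigmaZ M Z)"
    unfolding subalgebra_def sigmaZ_def using sets_image_in_sets[OF refl Z] by simp
  then have "finite_measure_subalgebra M (sigmaZ M Z)"
    by unfold_locales
  then show ?thesis by (rule finite_measure_subalgebra_is_sigma_finite)
qed

lemma measurable_sigmaZ_comp:
  assumes "f \<in> borel \<rightarrow>\<^sub>M N"
  shows "(\<lambda>x. f (Z x)) \<in> sigmaZ M Z \<rightarrow>\<^sub>M N"
proof -
  have "Z \<in> sigmaZ M Z \<rightarrow>\<^sub>M borel"
    unfolding sigmaZ_def by (rule measurable_vimage_algebra1) simp
  from measurable_comp[OF this assms] show ?thesis by (simp add: o_def)
qed

lemma H0_iff_set_integral_zero: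
  assumes "prob_space M" and "Z \<in> borel_measurable M" and U: "integrable M U"
  shows "H0 M U Z \<longleftrightarrow> (\<forall>A\<in>sets (sigmaZ M Z). (\<integral>x\<in>A. U x \<partial>M) = 0)"
proof -
  interpret S: sigma_finite_subalgebra M "sigmaZ M Z"
    using sigma_finite_subalgebra_sigmaZ[OF assms(1,2)] .
  show ?thesis
  proof
    assume H0: "H0 M U Z"
    show "\<forall>A\<in>sets (sigmaZ M Z). (\<integral>x\<in>A. U x \<partial>M) = 0"
    proof
      fix A assume A: "A \<in> sets (sigmaZ M Z)"
      have "(\<integral>x\<in>A. U x \<partial>M) = (\<integral>x\<in>A. muU M U Z x \<partial>M)"
        unfolding muU_def by (rule S.real_cond_exp_intA[OF U A])
      also have "\<dots> = 0"
        using H0 unfolding H0_def set_lebesgue_integral_def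
        by (intro integral_eq_zero_AE) (auto elim!: AE_mp)
      finally show "(\<integral>x\<in>A. U x \<partial>M) = 0" .
    qed
  next
    assume "\<forall>A\<in>sets (sigmaZ M Z). (\<integral>x\<in>A. U x \<partial>M) = 0"
    then have "AE x in M. real_cond_exp M (sigmaZ M Z) U x = 0"
      by (intro S.real_cond_exp_charact) (auto simp: U)
    then show "H0 M U Z" unfolding H0_def muU_def .
  qed
qed

lemma H0_iff_integral_indicator_zero:
  fixes Z :: "'a \<Rightarrow> 'z::topological_space"
  assumes "prob_space M" and "Z \<in> borel_measurable M" and "integrable M U"
  shows "H0 M U Z \<longleftrightarrow> (\<forall>C\<in>sets borel. (\<integral>x. indicator C (Z x) * U x \<partial>M) = 0)"
proof -
  have sets_sigmaZ: "sets (sigmaZ M Z) = {Z -` C \<inter> space M | C. C \<in> sets borel}"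
    unfolding sigmaZ_def by (rule sets_vimage_algebra2) simp
  have indicator_eq: "(\<integral>x\<in>Z -` C \<inter> space M. U x \<partial>M) = (\<integral>x. indicator C (Z x) * U x \<partial>M)" for C
    unfolding set_lebesgue_integral_def
    by (rule Bochner_Integration.integral_cong) (auto split: split_indicator)
  show ?thesis
    unfolding H0_iff_set_integral_zero[OF assms] sets_sigmaZ by (auto simp flip: indicator_eq)
qed

lemma borel_measurable_fst[measurable]: "fst \<in> borel \<rightarrow>\<^sub>M (borel :: 'a::topological_space measure)"
  by (intro borel_measurable_continuous_onI continuous_intros)

lemma borel_measurable_snd[measurable]: "snd \<in> borel \<rightarrow>\<^sub>M (borel :: 'b::topological_space measure)"
  by (intro borel_measurable_continuous_onI continuous_intros)

lemma H0_distr_iff: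
  fixes Z :: "'a \<Rightarrow> 'z::euclidean_space"
  assumes "prob_space M" and Z[measurable]: "Z \<in> borel_measurable M" and U: "integrable M U"
  shows "H0 (distr M borel (\<lambda>x. (U x, Z x))) fst snd \<longleftrightarrow> H0 M U Z"
proof -
  let ?P = "distr M borel (\<lambda>x. (U x, Z x))"
  interpret prob_space M by fact
  have [measurable]: "U \<in> borel_measurable M" using U by auto
  have P: "prob_space ?P" by (rule prob_space_distr) simp
  have meas_P: "borel_measurable ?P = borel_measurable borel"
    by (rule measurable_cong_sets) simp_all
  have fst_P: "integrable ?P fst" by (subst integrable_distr_eq) (auto simp: U)
  have "H0 ?P fst snd \<longleftrightarrow> (\<forall>C\<in>sets borel. (\<integral>w. indicator C (snd w) * fst w \<partial>?P) = 0)"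
    by (rule H0_iff_integral_indicator_zero[OF P _ fst_P]) (simp add: meas_P)
  also have "\<dots> \<longleftrightarrow> (\<forall>C\<in>sets borel. (\<integral>x. indicator C (Z x) * U x \<partial>M) = 0)"
    by (simp add: integral_distr)
  also have "\<dots> \<longleftrightarrow> H0 M U Z"
    by (rule H0_iff_integral_indicator_zero[OF assms, symmetric])
  finally show ?thesis .
qed

lemma GMDD_eq_0_iff_H0:
  fixes Z :: "'a \<Rightarrow> 'z::euclidean_space" and K :: "'z \<Rightarrow> real"
  assumes omnibus: "omnibus K" and K[measurable]: "K \<in> borel_measurable borel"
    and "prob_space M" and Z[measurable]: "Z \<in> borel_measurable M"
    and U: "integrable M U" and "(\<integral>x. U x \<partial>M) = 0"
    and int_UUK: "integrable (M \<Otimes>\<^sub>M M) (\<lambda>w. U (fst w) * U (snd w) * K (Z (fst w) - Z (snd w)))"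
  shows "GMDD M U Z K = 0 \<longleftrightarrow> H0 M U Z"
proof -
  interpret prob_space M by fact
  have [measurable]: "U \<in> borel_measurable M" using U by auto
  define P where "P = distr M borel (\<lambda>x. (U x, Z x))"
  define pair where "pair = (\<lambda>(x, y). ((U x, Z x), (U y, Z y)))"
  define G where "G = (\<lambda>w::(real \<times> 'z) \<times> (real \<times> 'z). fst (fst w) * fst (snd w) * K (snd (fst w) - snd (snd w)))"
  have pair[measurable]: "pair \<in> M \<Otimes>\<^sub>M M \<rightarrow>\<^sub>M borel \<Otimes>\<^sub>M borel" unfolding pair_def by measurable
  have G[measurable]: "G \<in> borel_measurable (borel \<Otimes>\<^sub>M borel)" unfolding G_def by measurable
  have P: "prob_space P" unfolding P_def by (rule prob_space_distr) simp
  have PP: "P \<Otimes>\<^sub>M P = distr (M \<Otimes>\<^sub>M M) (borel \<Otimes>\<^sub>M borel) pair"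
    unfolding P_def pair_def
    by (rule pair_measure_distr) (auto intro: prob_space_imp_sigma_finite P[unfolded P_def])
  have G_pair: "(\<lambda>w. G (pair w)) = (\<lambda>w. U (fst w) * U (snd w) * K (Z (fst w) - Z (snd w)))"
    unfolding G_def pair_def by (auto simp: case_prod_beta)
  have "GMDD P fst snd K = - (\<integral>w. G w \<partial>(P \<Otimes>\<^sub>M P))"
    unfolding GMDD_def G_def ..
  also have "\<dots> = - (\<integral>w. G (pair w) \<partial>(M \<Otimes>\<^sub>M M))"
    unfolding PP by (simp add: integral_distr)
  also have "\<dots> = GMDD M U Z K"
    unfolding GMDD_def G_pair ..
  moreover have "integrable (P \<Otimes>\<^sub>M P) G"
    unfolding PP by (subst integrable_distr_eq) (simp_all add: G_pair int_UUK)
  moreover have "integrable P fst" "(\<integral>w. fst w \<partial>P) = 0"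
    unfolding P_def using assms(6) by (simp_all add: integrable_distr_eq integral_distr U)
  ultimately show ?thesis
    using omnibus P H0_distr_iff[OF assms(3,4,5)] unfolding omnibus_def G_def P_def by auto
qed

lemma Ha_imp_not_H0:
  assumes "Ha M U Z"
  shows "\<not> H0 M U Z"
proof
  assume "H0 M U Z"
  let ?N = "{x \<in> space M. muU M U Z x \<noteq> 0}"
  have "?N \<in> sets M" unfolding muU_def by measurable
  with \<open>H0 M U Z\<close> have "emeasure M ?N = 0"
    unfolding H0_def by (simp add: AE_iff_measurable)
  then have "measure M ?N = 0" by (simp add: measure_def)
  with assms show False unfolding Ha_def by simp
qed

lemma
  fixes f :: "'a \<Rightarrow> 'b::{banach, second_countable_topology} \<times> 'b"
  assumes "integrable M f"
  shows integrable_fst_plus_snd: "integrable M (\<lambda>x. fst (f x) + snd (f x))"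
    and integral_fst_plus_snd: "fst (\<integral>x. f x \<partial>M) + snd (\<integral>x. f x \<partial>M) = (\<integral>x. fst (f x) + snd (f x) \<partial>M)"
proof -
  have lin: "bounded_linear (\<lambda>p::'b \<times> 'b. fst p + snd p)"
    by (intro bounded_linear_add bounded_linear_fst bounded_linear_snd)
  show "integrable M (\<lambda>x. fst (f x) + snd (f x))"
    using integrable_bounded_linear[OF lin assms] .
  show "fst (\<integral>x. f x \<partial>M) + snd (\<integral>x. f x \<partial>M) = (\<integral>x. fst (f x) + snd (f x) \<partial>M)"
    using integral_bounded_linear[OF lin assms] by simp
qed

lemma fst_plus_snd_scaleR: "fst (c *\<^sub>R p) + snd (c *\<^sub>R p) = c * (fst p + snd p)"
  by (simp add: distrib_left)

lemma deltaV_component_sum: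
  fixes V :: "'a \<Rightarrow> real \<times> real"
  assumes sum: "\<And>x. fst (V x) + snd (V x) = U x"
    and int: "integrable (M \<Otimes>\<^sub>M M) (\<lambda>w. (K (Z (fst w) - Z (snd w)) * U (snd w)) *\<^sub>R V (fst w))"
  shows "fst (deltaV M U Z V K) + snd (deltaV M U Z V K) = - GMDD M U Z K"
  unfolding deltaV_def GMDD_def integral_fst_plus_snd[OF int] fst_plus_snd_scaleR sum
  by (simp add: mult_ac)

lemma mfun_component_sum:
  fixes V :: "'a \<Rightarrow> real \<times> real"
  assumes sum: "\<And>x. fst (V x) + snd (V x) = U x"
    and int: "integrable M (\<lambda>y. K (z - Z y) *\<^sub>R V y)"
  shows "fst (mfun M Z V K z) + snd (mfun M Z V K z) = (\<integral>y. K (z - Z y) * U y \<partial>M)"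
  unfolding mfun_def integral_fst_plus_snd[OF int] fst_plus_snd_scaleR sum ..

lemma cond1_integral_component_sum:
  fixes Z :: "'a \<Rightarrow> 'z::euclidean_space" and V :: "'a \<Rightarrow> real \<times> real"
  assumes "prob_space M" and Z[measurable]: "Z \<in> borel_measurable M"
    and K[measurable]: "K \<in> borel_measurable borel" and U: "integrable M U"
    and sum: "\<And>x. fst (V x) + snd (V x) = U x"
    and int_KV: "\<And>x. x \<in> space M \<Longrightarrow> integrable M (\<lambda>y. K (Z x - Z y) *\<^sub>R V y)"
    and int_Um: "integrable M (\<lambda>x. U x *\<^sub>R mfun M Z V K (Z x))"
    and int_muUm: "integrable M (\<lambda>x. muU M U Z x *\<^sub>R mfun M Z V K (Z x))"
    and int_UUK: "integrable (M \<Otimes>\<^sub>M M) (\<lambda>w. U (fst w) * U (snd w) * K (Z (fst w) - Z (snd w)))"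
  shows "fst (\<integral>x. muU M U Z x *\<^sub>R mfun M Z V K (Z x) \<partial>M)
       + snd (\<integral>x. muU M U Z x *\<^sub>R mfun M Z V K (Z x) \<partial>M) = - GMDD M U Z K"
proof -
  interpret prob_space M by fact
  interpret S: sigma_finite_subalgebra M "sigmaZ M Z"
    using sigma_finite_subalgebra_sigmaZ[OF assms(1,2)] .
  interpret MM: pair_sigma_finite M M
    by (simp add: pair_sigma_finite_def prob_space_imp_sigma_finite assms(1))
  have [measurable]: "U \<in> borel_measurable M" using U by auto
  define s where "s z = (\<integral>y. K (z - Z y) * U y \<partial>M)" for z
  have [measurable]: "s \<in> borel_measurable borel" unfolding s_def by measurable
  have m_sum: "fst (mfun M Z V K (Z x)) + snd (mfun M Z V K (Z x)) = s (Z x)" if "x \<in> space M" for x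
    unfolding s_def using mfun_component_sum[OF sum int_KV[OF that]] .
  have int_sU: "integrable M (\<lambda>x. s (Z x) * U x)"
    using integrable_fst_plus_snd[OF int_Um]
    by (rule Bochner_Integration.integrable_cong[OF refl, THEN iffD1, rotated])
       (subst fst_plus_snd_scaleR, simp add: m_sum mult.commute)
  have "fst (\<integral>x. muU M U Z x *\<^sub>R mfun M Z V K (Z x) \<partial>M)
      + snd (\<integral>x. muU M U Z x *\<^sub>R mfun M Z V K (Z x) \<partial>M)
      = (\<integral>x. s (Z x) * real_cond_exp M (sigmaZ M Z) U x \<partial>M)"
    unfolding integral_fst_plus_snd[OF int_muUm] fst_plus_snd_scaleR
    by (intro Bochner_Integration.integral_cong) (simp_all add: m_sum muU_def mult.commute)
  also have "\<dots> = (\<integral>x. s (Z x) * U x \<partial>M)"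
    by (rule S.real_cond_exp_intg(2)) (simp_all add: int_sU measurable_sigmaZ_comp)
  also have "\<dots> = (\<integral>x. (\<integral>y. U x * U y * K (Z x - Z y) \<partial>M) \<partial>M)"
    unfolding s_def by (simp add: mult_ac flip: integral_mult_left_zero)
  also have "\<dots> = - GMDD M U Z K"
    unfolding GMDD_def using MM.integral_fst'[OF int_UUK] by simp
  finally show ?thesis .
qed

lemma fst_muV:
  fixes V :: "'a \<Rightarrow> real \<times> 'v::euclidean_space"
  shows "fst (muV M Z V x) = real_cond_exp M (sigmaZ M Z) (\<lambda>y. fst (V y)) x"
  by (simp add: muV_def Basis_prod_def fst_sum inner_prod_def image_iff sum.reindex inj_on_def)

lemma muV_not_AE_zero:
  fixes V :: "'a \<Rightarrow> real \<times> 'v::euclidean_space"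
  assumes "prob_space M" and "Z \<in> borel_measurable M"
    and "integrable M (\<lambda>x. fst (V x))" and "(\<lambda>x. fst (V x)) \<in> borel_measurable (sigmaZ M Z)"
    and nonzero: "\<not> (AE x in M. fst (V x) = 0)"
  shows "\<not> (AE x in M. muV M Z V x = 0)"
proof
  interpret S: sigma_finite_subalgebra M "sigmaZ M Z"
    using sigma_finite_subalgebra_sigmaZ[OF assms(1,2)] .
  assume "AE x in M. muV M Z V x = 0"
  moreover have "AE x in M. real_cond_exp M (sigmaZ M Z) (\<lambda>y. fst (V y)) x = fst (V x)"
    using assms(3,4) by (rule S.real_cond_exp_F_meas)
  ultimately have "AE x in M. fst (V x) = 0"
    by eventually_elim (metis fst_muV fst_zero)
  with nonzero show False ..
qed

theorem lemma1:
  fixes M :: "'a measure" and U :: "'a \<Rightarrow> real" and Z :: "'a \<Rightarrow> 'z::euclidean_space"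
    and \<nu> :: "'z measure" and h :: "'z \<Rightarrow> real" and V :: "'a \<Rightarrow> real \<times> real"
  assumes "prob_space M"
    and "sets \<nu> = sets borel"
    and "distr \<nu> borel uminus = \<nu>"
    and "\<And>z. integrable \<nu> (\<lambda>s. 1 - cos (z \<bullet> s))"
    and "omnibus (Kfun \<nu>)"
    and "Z \<in> borel_measurable M"
    and "integrable M U" and "(\<integral>x. U x \<partial>M) = 0"
    and "h \<in> borel_measurable borel"
    and "\<not> (\<exists>c. AE x in M. h (Z x) = c)"
    and V_def: "V = (\<lambda>x. (h (Z x), U x - h (Z x)))"
    and "integrable M (\<lambda>x. h (Z x))"
    and "integrable (M \<Otimes>\<^sub>M M) (\<lambda>w. U (fst w) * U (snd w) * Kfun \<nu> (Z (fst w) - Z (snd w)))"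
    and "integrable (M \<Otimes>\<^sub>M M) (\<lambda>w. (Kfun \<nu> (Z (fst w) - Z (snd w)) * U (snd w)) *\<^sub>R V (fst w))"
    and "\<And>x. x \<in> space M \<Longrightarrow> integrable M (\<lambda>y. Kfun \<nu> (Z x - Z y) *\<^sub>R V y)"
    and "integrable M (\<lambda>x. U x *\<^sub>R mfun M Z V (Kfun \<nu>) (Z x))"
    and "integrable M (\<lambda>x. muU M U Z x *\<^sub>R mfun M Z V (Kfun \<nu>) (Z x))"
  shows "cond1 M U Z V (Kfun \<nu>) \<and> cond2 M U Z V
         \<and> (Ha M U Z \<longrightarrow> deltaV M U Z V (Kfun \<nu>) \<noteq> 0)"
proof -
  have K: "Kfun \<nu> \<in> borel_measurable borel"
    using Kfun_borel_measurable[OF assms(2,4)] .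
  have sum: "\<And>x. fst (V x) + snd (V x) = U x" unfolding V_def by simp
  have GMDD: "GMDD M U Z (Kfun \<nu>) \<noteq> 0" if "Ha M U Z"
    using GMDD_eq_0_iff_H0[OF assms(5) K assms(1,6,7,8,13)] Ha_imp_not_H0[OF that] by simp
  have "fst (\<integral>x. muU M U Z x *\<^sub>R mfun M Z V (Kfun \<nu>) (Z x) \<partial>M)
      + snd (\<integral>x. muU M U Z x *\<^sub>R mfun M Z V (Kfun \<nu>) (Z x) \<partial>M) = - GMDD M U Z (Kfun \<nu>)"
    by (rule cond1_integral_component_sum[OF assms(1,6) K assms(7) sum assms(15,16,17,13)])
  with GMDD have "cond1 M U Z V (Kfun \<nu>)"
    unfolding cond1_def by fastforce
  moreover have "cond2 M U Z V"
    unfolding cond2_def using assms(10)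
    by (intro impI muV_not_AE_zero[OF assms(1,6)])
       (auto simp: V_def assms(12) intro: measurable_sigmaZ_comp[OF assms(9)])
  moreover have "deltaV M U Z V (Kfun \<nu>) \<noteq> 0" if "Ha M U Z"
    using deltaV_component_sum[OF sum assms(14)] GMDD[OF that] by fastforce
  ultimately show ?thesis by blast
qed

end
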